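(* Let $\mathcal{A}$ be an uncountable almost disjoint family of infinite subsets of $\omega$ and let $\mathcal{I}$ be an ideal. The following are equivalent: (a) $\Phi(\mathcal{A})$ is in $\mathrm{FinBW}(\mathcal{I})$; (b) for every $f\in\mathcal{D}_{\mathcal{I}}$ there is $B\notin\mathcal{I}$ such that $f|B$ is finite-to-one and $f[B]\in\mathrm{Fin}^2(\mathcal{A})$.
   Context: An ideal on an infinite countable set $X$ is a family $\mathcal{I}\subseteq\mathcal{P}(X)$ closed under subsets and finite unions, containing all finite subsets, with $X\notin\mathcal{I}$. A space $X$ is in $\mathrm{FinBW}(\mathcal{I})$ if $X$ is Hausdorff and for every sequence $(x_n)_{n\in\bigcup\mathcal{I}}$ in $X$ there is $A\notin\mathcal{I}$ with $(x_n)_{n\in A}$ convergent in $X$. $\mathcal{D}_{\mathcal{I}}$ is the set of functions $f:\bigcup\mathcal{I}\to\omega$ with $f^{-1}[\{n\}]\in\mathcal{I}$ for all $n$. For an almost disjoint family $\mathcal{A}$ (infinite subsets of $\omega$ with pairwise finite intersections), $\mathrm{Fin}^2(\mathcal{A})$ is the ideal on $\omega$ generated by the members of $\mathcal{A}$ together with all sets having finite intersection with every member of $\mathcal{A}$. $\Phi(\mathcal{A})$ is the space on $\omega\cup\mathcal{A}\cup\{\infty\}$ with points of $\omega$ isolated, basic neighbourhoods of $A\in\mathcal{A}$ of the form $\{A\}\cup(A\setminus F)$ ($F\subseteq\omega$ finite) and of $\infty$ of the form $\{\infty\}\cup(\mathcal{A}\setminus G)\cup(\omega\setminus(F\cup\bigcup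 G))$ ($F\subseteq\omega$, $G\subseteq\mathcal{A}$ finite). *)

theory Defs
  imports "HOL-Analysis.Analysis"
begin

definition is_ideal :: "'a set set \<Rightarrow> bool" where
  "is_ideal I \<longleftrightarrow>
     countable (\<Union>I) \<and> infinite (\<Union>I) \<and>
     (\<forall>A\<in>I. \<forall>B. B \<subseteq> A \<longrightarrow> B \<in> I) \<and>
     (\<forall>A\<in>I. \<forall>B\<in>I. A \<union> B \<in> I) \<and>
     (\<forall>F. F \<subseteq> \<Union>I \<and> finite F \<longrightarrow> F \<in> I) \<and>
     \<Union>I \<notin> I"

definition conv_on :: "'b topology \<Rightarrow> ('a \<Rightarrow> 'b) \<Rightarrow> 'a set \<Rightarrow> 'b \<Rightarrow> bool" where
  "conv_on T x A l \<longleftrightarrow>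
     l \<in> topspace T \<and> (\<forall>U. openin T U \<and> l \<in> U \<longrightarrow> finite {n \<in> A. x n \<notin> U})"

definition FinBW :: "'a set set \<Rightarrow> 'b topology \<Rightarrow> bool" where
  "FinBW I T \<longleftrightarrow> Hausdorff_space T \<and>
     (\<forall>x. (\<forall>n\<in>\<Union>I. x n \<in> topspace T) \<longrightarrow>
        (\<exists>A. A \<subseteq> \<Union>I \<and> A \<notin> I \<and> (\<exists>l. conv_on T x A l)))"

definition D_ideal :: "'a set set \<Rightarrow> ('a \<Rightarrow> nat) set" where
  "D_ideal I = {f. \<forall>n. {x \<in> \<Union>I. f x = n} \<in> I}"

definition almost_disjoint :: "nat set set \<Rightarrow> bool" where
  "almost_disjoint \<A> \<longleftrightarrow> (\<forall>a\<in>\<A>. infinite a) \<and>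
     (\<forall>a\<in>\<A>. \<forall>b\<in>\<A>. a \<noteq> b \<longrightarrow> finite (a \<inter> b))"

text \<open>Fin^2(A): the ideal generated by A together with all sets having finite
  intersection with every member of A (the latter family is closed under finite
  unions, so the generated ideal has this form).\<close>
definition Fin2 :: "nat set set \<Rightarrow> nat set set" where
  "Fin2 \<A> = {S. \<exists>F T. F \<subseteq> \<A> \<and> finite F \<and> (\<forall>a\<in>\<A>. finite (T \<inter> a)) \<and>
                       S \<subseteq> \<Union>F \<union> T}"

datatype phi_pt = Pt nat | Ad "nat set" | Infty

definition phi_carrier :: "nat set set \<Rightarrow> phi_pt set" where
  "phi_carrier \<A> = range Pt \<union> Ad ` \<A> \<union> {Infty}"

definition phi_basic :: "nat set set \<Rightarrow> phi_pt \<Rightarrow> phi_pt set \<Rightarrow> bool" where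
  "phi_basic \<A> p N \<longleftrightarrow>
     (\<exists>n. p = Pt n \<and> N = {Pt n}) \<or>
     (\<exists>a F. a \<in> \<A> \<and> p = Ad a \<and> finite F \<and> N = {Ad a} \<union> Pt ` (a - F)) \<or>
     (\<exists>F G. p = Infty \<and> finite F \<and> finite G \<and> G \<subseteq> \<A> \<and>
        N = {Infty} \<union> Ad ` (\<A> - G) \<union> Pt ` (UNIV - (F \<union> \<Union>G)))"

definition Phi :: "nat set set \<Rightarrow> phi_pt topology" where
  "Phi \<A> = topology (\<lambda>U. U \<subseteq> phi_carrier \<A> \<and>
              (\<forall>p\<in>U. \<exists>N. phi_basic \<A> p N \<and> N \<subseteq> U))"

end

theory Submission
  imports Defs
begin

(* A sequence of isolated points Pt (f n) converges in Phi(A) along S to Pt m iff f is almost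
   constantly m on S, to Ad a iff f is finite-to-one on S and f[S] is almost contained in a, and
   to Infty iff f is finite-to-one on S and f[S] meets every member of A in a finite set.  For
   f in D_I the first case is impossible on an I-positive S, which gives (a) => (b).
   Conversely, a sequence x with an I-positive fibre has a constant subsequence.  Otherwise x
   is read as some f in D_I (isolated points by their index, all other points injectively),
   and B from (b) is split into its isolated, Ad and Infty parts.  The Infty part lies in I; on
   an I-positive Ad part x tends to Infty because f is finite-to-one; an I-positive isolated
   part is covered by the preimages of finitely many a in A and of a set almost disjoint from A,
   so one of these is I-positive and converges to Ad a or to Infty. *)

subsection \<open>The topology of Phi(A)\<close>

lemma istopology_neighbourhood_base:
  assumes "\<And>p N1 N2. B p N1 \<Longrightarrow> B p N2 \<Longrightarrow> \<exists>N. B p N \<and> N \<subseteq> N1 \<inter> N2"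
  shows "istopology (\<lambda>U. U \<subseteq> X \<and> (\<forall>p\<in>U. \<exists>N. B p N \<and> N \<subseteq> U))"
proof -
  have "S \<inter> T \<subseteq> X \<and> (\<forall>p\<in>S \<inter> T. \<exists>N. B p N \<and> N \<subseteq> S \<inter> T)"
    if S: "S \<subseteq> X \<and> (\<forall>p\<in>S. \<exists>N. B p N \<and> N \<subseteq> S)"
      and T: "T \<subseteq> X \<and> (\<forall>p\<in>T. \<exists>N. B p N \<and> N \<subseteq> T)" for S T
  proof (intro conjI ballI)
    show "S \<inter> T \<subseteq> X" using S by blast
    fix p assume "p \<in> S \<inter> T"
    then obtain N1 N2 where "B p N1" "N1 \<subseteq> S" "B p N2" "N2 \<subseteq> T"
      using S T by blast
    with assms[of p N1 N2] show "\<exists>N. B p N \<and> N \<subseteq> S \<inter> T" by blast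
  qed
  moreover have "\<Union>K \<subseteq> X \<and> (\<forall>p\<in>\<Union>K. \<exists>N. B p N \<and> N \<subseteq> \<Union>K)"
    if "\<forall>S\<in>K. S \<subseteq> X \<and> (\<forall>p\<in>S. \<exists>N. B p N \<and> N \<subseteq> S)" for K
  proof (intro conjI ballI)
    show "\<Union>K \<subseteq> X" using that by blast
    fix p assume "p \<in> \<Union>K"
    then obtain S where "S \<in> K" "p \<in> S" by blast
    with that obtain N where "B p N" "N \<subseteq> S" by blast
    with \<open>S \<in> K\<close> show "\<exists>N. B p N \<and> N \<subseteq> \<Union>K" by blast
  qed
  ultimately show ?thesis unfolding istopology_def by simp
qed

lemma phi_basic_Pt: "phi_basic \<A> (Pt n) {Pt n}"
  unfolding phi_basic_def by simp

lemma phi_basic_Ad: "a \<in> \<A> \<Longrightarrow> finite F \<Longrightarrow> phi_basic \<A> (Ad a) ({Ad a} \<union> Pt ` (a - F))"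
  unfolding phi_basic_def by (rule disjI2, rule disjI1, intro exI[of _ a] exI[of _ F]) simp

lemma phi_basic_Infty:
  "finite F \<Longrightarrow> finite G \<Longrightarrow> G \<subseteq> \<A> \<Longrightarrow>
    phi_basic \<A> Infty ({Infty} \<union> Ad ` (\<A> - G) \<union> Pt ` (UNIV - (F \<union> \<Union>G)))"
  unfolding phi_basic_def by (intro disjI2 exI[of _ F] exI[of _ G]) simp

lemma almost_disjointD:
  "almost_disjoint \<A> \<Longrightarrow> a \<in> \<A> \<Longrightarrow> b \<in> \<A> \<Longrightarrow> a \<noteq> b \<Longrightarrow> finite (a \<inter> b)"
  unfolding almost_disjoint_def by blast

lemma phi_basicE:
  assumes "phi_basic \<A> p N"
  obtains (Pt) n where "p = Pt n" "N = {Pt n}"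
  | (Ad) a F where "a \<in> \<A>" "finite F" "p = Ad a" "N = {Ad a} \<union> Pt ` (a - F)"
  | (Infty) F G where "finite F" "finite G" "G \<subseteq> \<A>" "p = Infty"
      "N = {Infty} \<union> Ad ` (\<A> - G) \<union> Pt ` (UNIV - (F \<union> \<Union>G))"
  using assms unfolding phi_basic_def by (elim disjE exE conjE) simp_all

lemma phi_basic_mem: "phi_basic \<A> p N \<Longrightarrow> p \<in> N"
  unfolding phi_basic_def by auto

lemma phi_basic_subset_carrier: "phi_basic \<A> p N \<Longrightarrow> N \<subseteq> phi_carrier \<A>"
  unfolding phi_basic_def phi_carrier_def by auto

lemma phi_basic_Int:
  assumes "phi_basic \<A> p N1" "phi_basic \<A> p N2"
  shows "\<exists>N. phi_basic \<A> p N \<and> N \<subseteq> N1 \<inter> N2"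
proof (cases p)
  case (Pt n)
  then show ?thesis using assms unfolding phi_basic_def by auto
next
  case (Ad a)
  then obtain F1 F2 where "a \<in> \<A>" "finite F1" "finite F2"
    "N1 = {Ad a} \<union> Pt ` (a - F1)" "N2 = {Ad a} \<union> Pt ` (a - F2)"
    using assms unfolding phi_basic_def by auto
  with Ad show ?thesis
    using phi_basic_Ad[of a \<A> "F1 \<union> F2"] by blast
next
  case Infty
  then obtain F1 F2 G1 G2 where FG: "finite F1" "finite F2" "finite G1" "finite G2" "G1 \<subseteq> \<A>" "G2 \<subseteq> \<A>"
    "N1 = {Infty} \<union> Ad ` (\<A> - G1) \<union> Pt ` (UNIV - (F1 \<union> \<Union>G1))"
    "N2 = {Infty} \<union> Ad ` (\<A> - G2) \<union> Pt ` (UNIV - (F2 \<union> \<Union>G2))"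
    using assms unfolding phi_basic_def by auto
  let ?N = "{Infty} \<union> Ad ` (\<A> - (G1 \<union> G2)) \<union> Pt ` (UNIV - (F1 \<union> F2 \<union> \<Union>(G1 \<union> G2)))"
  have "phi_basic \<A> Infty ?N"
    using FG by (intro phi_basic_Infty) auto
  moreover have "?N \<subseteq> N1 \<inter> N2"
    using FG(7,8) by blast
  ultimately show ?thesis using Infty by blast
qed

lemma openin_Phi:
  "openin (Phi \<A>) U \<longleftrightarrow> U \<subseteq> phi_carrier \<A> \<and> (\<forall>p\<in>U. \<exists>N. phi_basic \<A> p N \<and> N \<subseteq> U)"
  unfolding Phi_def using istopology_neighbourhood_base[OF phi_basic_Int] by simp

lemma phi_carrier_cases:
  assumes "p \<in> phi_carrier \<A>"
  obtains (Pt) n where "p = Pt n" | (Ad) a where "a \<in> \<A>" "p = Ad a" | (Infty) "p = Infty"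
  using assms unfolding phi_carrier_def by blast

lemma phi_basic_avoiding_Pt:
  assumes "q \<in> phi_carrier \<A>" "q \<noteq> Pt n"
  shows "\<exists>M. phi_basic \<A> q M \<and> Pt n \<notin> M"
  using assms(1)
proof (cases rule: phi_carrier_cases)
  case (Pt m)
  then show ?thesis using assms(2) phi_basic_Pt by blast
next
  case (Ad a)
  then show ?thesis using phi_basic_Ad[of a \<A> "{n}"] by blast
next
  case Infty
  then show ?thesis using phi_basic_Infty[of "{n}" "{}" \<A>] by blast
qed

lemma topspace_Phi: "topspace (Phi \<A>) = phi_carrier \<A>"
proof -
  have "\<exists>N. phi_basic \<A> p N" if "p \<in> phi_carrier \<A>" for p
    using phi_basic_avoiding_Pt[OF that, of 0] phi_basic_Pt by (cases "p = Pt 0") auto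
  then have "openin (Phi \<A>) (phi_carrier \<A>)"
    unfolding openin_Phi using phi_basic_subset_carrier by blast
  then show ?thesis unfolding topspace_def openin_Phi by blast
qed

lemma phi_basic_openin:
  assumes "almost_disjoint \<A>" "phi_basic \<A> p N"
  shows "openin (Phi \<A>) N"
  unfolding openin_Phi
proof (intro conjI ballI)
  show "N \<subseteq> phi_carrier \<A>"
    using assms(2) by (rule phi_basic_subset_carrier)
  fix q assume "q \<in> N"
  show "\<exists>M. phi_basic \<A> q M \<and> M \<subseteq> N"
  proof (cases q)
    case (Pt m)
    then show ?thesis using phi_basic_Pt[of \<A> m] \<open>q \<in> N\<close> by auto
  next
    case (Ad b)
    note q = this
    from assms(2) show ?thesis
    proof (cases rule: phi_basicE)
      case (Pt n)
      with q \<open>q \<in> N\<close> show ?thesis by simp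
    next
      case (Ad a F)
      with q \<open>q \<in> N\<close> have "q = p" by auto
      then show ?thesis using assms(2) by blast
    next
      case (Infty F G)
      with q \<open>q \<in> N\<close> have b: "b \<in> \<A>" "b \<notin> G" by auto
      define E where "E = F \<union> (\<Union>g\<in>G. b \<inter> g)"
      have "finite (b \<inter> g)" if "g \<in> G" for g
        using almost_disjointD[OF assms(1) b(1)] Infty(3) b(2) that by blast
      then have "finite E"
        unfolding E_def using Infty(1,2) by blast
      then have "phi_basic \<A> q ({Ad b} \<union> Pt ` (b - E))"
        unfolding q by (rule phi_basic_Ad[OF b(1)])
      moreover have "{Ad b} \<union> Pt ` (b - E) \<subseteq> N"
        unfolding E_def using b Infty(5) by blast
      ultimately show ?thesis by blast
    qed
  next
    case Infty
    with assms(2) \<open>q \<in> N\<close> have "q = p"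
      by (cases rule: phi_basicE) auto
    then show ?thesis using assms(2) by blast
  qed
qed

lemma phi_basic_separating_Pt:
  assumes "q \<in> phi_carrier \<A>" "q \<noteq> Pt n"
  shows "\<exists>N M. phi_basic \<A> (Pt n) N \<and> phi_basic \<A> q M \<and> disjnt N M"
  using phi_basic_avoiding_Pt[OF assms] phi_basic_Pt[of \<A> n] by (auto simp: disjnt_def)

lemma phi_basic_separating_Ad:
  assumes ad: "almost_disjoint \<A>" and a: "a \<in> \<A>"
    and q: "q \<in> phi_carrier \<A>" "q \<notin> range Pt" "q \<noteq> Ad a"
  shows "\<exists>N M. phi_basic \<A> (Ad a) N \<and> phi_basic \<A> q M \<and> disjnt N M"
  using q(1)
proof (cases rule: phi_carrier_cases)
  case (Pt n)
  with q(2) show ?thesis by simp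
next
  case (Ad b)
  with a q(3) have "finite (a \<inter> b)"
    by (intro almost_disjointD[OF ad]) auto
  then have "phi_basic \<A> (Ad a) ({Ad a} \<union> Pt ` (a - a \<inter> b))"
    and "phi_basic \<A> q ({Ad b} \<union> Pt ` (b - a \<inter> b))"
    unfolding Ad(2) using a Ad(1) by (simp_all only: phi_basic_Ad)
  moreover have "disjnt ({Ad a} \<union> Pt ` (a - a \<inter> b)) ({Ad b} \<union> Pt ` (b - a \<inter> b))"
    using Ad(2) q(3) by (auto simp: disjnt_def)
  ultimately show ?thesis by blast
next
  case Infty
  have "phi_basic \<A> (Ad a) ({Ad a} \<union> Pt ` (a - {}))"
    using a by (simp only: phi_basic_Ad finite.emptyI)
  moreover have "phi_basic \<A> q ({Infty} \<union> Ad ` (\<A> - {a}) \<union> Pt ` (UNIV - ({} \<union> \<Union>{a})))"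
    unfolding Infty using a by (intro phi_basic_Infty) auto
  moreover have "disjnt ({Ad a} \<union> Pt ` (a - {}))
      ({Infty} \<union> Ad ` (\<A> - {a}) \<union> Pt ` (UNIV - ({} \<union> \<Union>{a})))"
    by (auto simp: disjnt_def)
  ultimately show ?thesis by blast
qed

lemma phi_basic_separating:
  assumes ad: "almost_disjoint \<A>" and "p \<in> phi_carrier \<A>" "q \<in> phi_carrier \<A>" "p \<noteq> q"
  shows "\<exists>N M. phi_basic \<A> p N \<and> phi_basic \<A> q M \<and> disjnt N M"
proof -
  have swap: "\<exists>N M. phi_basic \<A> p N \<and> phi_basic \<A> q M \<and> disjnt N M"
    if "\<exists>M N. phi_basic \<A> q M \<and> phi_basic \<A> p N \<and> disjnt M N"
    using that disjnt_sym by blast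
  from assms(2) show ?thesis
  proof (cases rule: phi_carrier_cases)
    case (Pt n)
    then show ?thesis using phi_basic_separating_Pt[of q \<A> n] assms(3,4) by simp
  next
    case (Ad a)
    show ?thesis
    proof (cases "q \<in> range Pt")
      case True
      then obtain n where "q = Pt n" by blast
      then show ?thesis using phi_basic_separating_Pt[of p \<A> n] assms(2,4) swap by simp
    next
      case False
      then show ?thesis
        using phi_basic_separating_Ad[OF ad Ad(1) assms(3) False] Ad(2) assms(4) by simp
    qed
  next
    case Infty
    from assms(3) show ?thesis
    proof (cases rule: phi_carrier_cases)
      case (Pt n)
      then show ?thesis using phi_basic_separating_Pt[of p \<A> n] assms(2,4) swap by simp
    next
      case (Ad a)
      then show ?thesis using phi_basic_separating_Ad[OF ad, of a p] Infty assms(2) swap by auto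
    next
      case Infty
      then show ?thesis using \<open>p = Infty\<close> assms(4) by simp
    qed
  qed
qed

lemma Hausdorff_Phi:
  assumes "almost_disjoint \<A>"
  shows "Hausdorff_space (Phi \<A>)"
  unfolding Hausdorff_space_def topspace_Phi
proof (intro allI impI)
  fix p q assume "p \<in> phi_carrier \<A> \<and> q \<in> phi_carrier \<A> \<and> p \<noteq> q"
  then obtain N M where N: "phi_basic \<A> p N" and M: "phi_basic \<A> q M" and "disjnt N M"
    using phi_basic_separating[OF assms] by blast
  moreover have "openin (Phi \<A>) N" "openin (Phi \<A>) M"
    using phi_basic_openin[OF assms N] phi_basic_openin[OF assms M] by simp_all
  moreover have "p \<in> N" "q \<in> M"
    using phi_basic_mem[OF N] phi_basic_mem[OF M] by simp_all
  ultimately show "\<exists>U V. openin (Phi \<A>) U \<and> openin (Phi \<A>) V \<and> p \<in> U \<and> q \<in> V \<and> disjnt U V"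
    by blast
qed

subsection \<open>Convergence in Phi(A)\<close>

lemma conv_on_const:
  assumes "p \<in> topspace T" "\<And>n. n \<in> S \<Longrightarrow> x n = p"
  shows "conv_on T x S p"
  unfolding conv_on_def
proof (intro conjI allI impI)
  fix U assume "openin T U \<and> p \<in> U"
  then have "{n \<in> S. x n \<notin> U} = {}"
    using assms(2) by auto
  then show "finite {n \<in> S. x n \<notin> U}" by (simp only: finite.emptyI)
qed (rule assms(1))

lemma conv_on_Phi_iff:
  assumes "almost_disjoint \<A>"
  shows "conv_on (Phi \<A>) x S l \<longleftrightarrow>
    l \<in> phi_carrier \<A> \<and> (\<forall>N. phi_basic \<A> l N \<longrightarrow> finite {n \<in> S. x n \<notin> N})"
  unfolding conv_on_def topspace_Phi
proof (intro conj_cong[OF refl] iffI allI impI)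
  fix N
  assume conv: "\<forall>U. openin (Phi \<A>) U \<and> l \<in> U \<longrightarrow> finite {n \<in> S. x n \<notin> U}"
    and N: "phi_basic \<A> l N"
  have "openin (Phi \<A>) N \<and> l \<in> N"
    using phi_basic_openin[OF assms N] phi_basic_mem[OF N] by simp
  with conv show "finite {n \<in> S. x n \<notin> N}" by blast
next
  fix U
  assume basic: "\<forall>N. phi_basic \<A> l N \<longrightarrow> finite {n \<in> S. x n \<notin> N}"
    and "openin (Phi \<A>) U \<and> l \<in> U"
  then obtain N where N: "phi_basic \<A> l N" "N \<subseteq> U"
    unfolding openin_Phi by blast
  have "{n \<in> S. x n \<notin> U} \<subseteq> {n \<in> S. x n \<notin> N}"
    using N(2) by blast
  moreover have "finite {n \<in> S. x n \<notin> N}"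
    using basic N(1) by blast
  ultimately show "finite {n \<in> S. x n \<notin> U}"
    by (rule finite_subset)
qed

lemma conv_on_Phi_Pt_iff:
  assumes "almost_disjoint \<A>"
  shows "conv_on (Phi \<A>) x S (Pt m) \<longleftrightarrow> finite {n \<in> S. x n \<noteq> Pt m}"
proof -
  have "phi_basic \<A> (Pt m) N \<longleftrightarrow> N = {Pt m}" for N
    unfolding phi_basic_def by simp
  then show ?thesis
    unfolding conv_on_Phi_iff[OF assms] phi_carrier_def by simp
qed

lemma conv_on_Phi_Ad_iff:
  assumes "almost_disjoint \<A>" "a \<in> \<A>"
  shows "conv_on (Phi \<A>) x S (Ad a) \<longleftrightarrow>
    (\<forall>m. finite {n \<in> S. x n = Pt m}) \<and> finite {n \<in> S. x n \<notin> insert (Ad a) (Pt ` a)}"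
    (is "_ \<longleftrightarrow> ?fibres \<and> ?almost_inside")
proof
  assume conv: "conv_on (Phi \<A>) x S (Ad a)"
  have outside: "finite {n \<in> S. x n \<notin> {Ad a} \<union> Pt ` (a - F)}" if "finite F" for F
    using conv phi_basic_Ad[OF assms(2) that] unfolding conv_on_Phi_iff[OF assms(1)] by blast
  have "finite {n \<in> S. x n = Pt m}" for m
    using outside[of "{m}"] by (rule finite_subset[rotated]) auto
  moreover have ?almost_inside
    using outside[of "{}"] by simp
  ultimately show "?fibres \<and> ?almost_inside" by blast
next
  assume H: "?fibres \<and> ?almost_inside"
  have "finite {n \<in> S. x n \<notin> N}" if "phi_basic \<A> (Ad a) N" for N
  proof -
    from that obtain F where F: "finite F" "N = {Ad a} \<union> Pt ` (a - F)"
      by (cases rule: phi_basicE) auto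
    have "{n \<in> S. x n \<notin> N} \<subseteq>
        {n \<in> S. x n \<notin> insert (Ad a) (Pt ` a)} \<union> (\<Union>m\<in>F. {n \<in> S. x n = Pt m})"
      using F(2) by auto
    moreover have "finite ({n \<in> S. x n \<notin> insert (Ad a) (Pt ` a)} \<union> (\<Union>m\<in>F. {n \<in> S. x n = Pt m}))"
      using H F(1) by simp
    ultimately show ?thesis by (rule finite_subset)
  qed
  then show "conv_on (Phi \<A>) x S (Ad a)"
    unfolding conv_on_Phi_iff[OF assms(1)] using assms(2) by (simp add: phi_carrier_def)
qed

lemma conv_on_Phi_Infty_iff:
  assumes "almost_disjoint \<A>" "x ` S \<subseteq> phi_carrier \<A>"
  shows "conv_on (Phi \<A>) x S Infty \<longleftrightarrow>
    (\<forall>m. finite {n \<in> S. x n = Pt m}) \<and> (\<forall>a\<in>\<A>. finite {n \<in> S. x n \<in> insert (Ad a) (Pt ` a)})"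
    (is "_ \<longleftrightarrow> ?fibres \<and> ?traces")
proof
  assume conv: "conv_on (Phi \<A>) x S Infty"
  have outside: "finite {n \<in> S. x n \<notin> {Infty} \<union> Ad ` (\<A> - G) \<union> Pt ` (UNIV - (F \<union> \<Union>G))}"
    if "finite F" "finite G" "G \<subseteq> \<A>" for F G
    using conv phi_basic_Infty[OF that] unfolding conv_on_Phi_iff[OF assms(1)] by blast
  have "finite {n \<in> S. x n = Pt m}" for m
    using outside[of "{m}" "{}"] by (rule finite_subset[rotated]) auto
  moreover have "finite {n \<in> S. x n \<in> insert (Ad a) (Pt ` a)}" if "a \<in> \<A>" for a
  proof -
    have "finite {n \<in> S. x n \<notin> {Infty} \<union> Ad ` (\<A> - {a}) \<union> Pt ` (UNIV - ({} \<union> \<Union>{a}))}"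
      using that by (intro outside) auto
    then show ?thesis by (rule finite_subset[rotated]) auto
  qed
  ultimately show "?fibres \<and> ?traces" by blast
next
  assume H: "?fibres \<and> ?traces"
  have "finite {n \<in> S. x n \<notin> N}" if "phi_basic \<A> Infty N" for N
  proof -
    from that obtain F G where FG: "finite F" "finite G" "G \<subseteq> \<A>"
      "N = {Infty} \<union> Ad ` (\<A> - G) \<union> Pt ` (UNIV - (F \<union> \<Union>G))"
      by (cases rule: phi_basicE) auto
    have "{n \<in> S. x n \<notin> N} \<subseteq>
        (\<Union>m\<in>F. {n \<in> S. x n = Pt m}) \<union> (\<Union>a\<in>G. {n \<in> S. x n \<in> insert (Ad a) (Pt ` a)})"
    proof
      fix n assume n: "n \<in> {n \<in> S. x n \<notin> N}"
      then have "x n \<in> phi_carrier \<A>" using assms(2) by blast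
      then show "n \<in> (\<Union>m\<in>F. {n \<in> S. x n = Pt m}) \<union> (\<Union>a\<in>G. {n \<in> S. x n \<in> insert (Ad a) (Pt ` a)})"
        using n FG(4) by (cases rule: phi_carrier_cases) auto
    qed
    moreover have "finite ((\<Union>m\<in>F. {n \<in> S. x n = Pt m}) \<union> (\<Union>a\<in>G. {n \<in> S. x n \<in> insert (Ad a) (Pt ` a)}))"
      using H FG(1-3) by auto
    ultimately show ?thesis by (rule finite_subset)
  qed
  then show "conv_on (Phi \<A>) x S Infty"
    unfolding conv_on_Phi_iff[OF assms(1)] by (simp add: phi_carrier_def)
qed

lemma conv_on_Phi_Infty_of_Ad_valued:
  assumes ad: "almost_disjoint \<A>" and "x ` S \<subseteq> Ad ` \<A>" and "\<And>p. finite {n \<in> S. x n = p}"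
  shows "conv_on (Phi \<A>) x S Infty"
proof -
  have carrier: "x ` S \<subseteq> phi_carrier \<A>"
    using assms(2) by (auto simp: phi_carrier_def)
  have no_Pt: "{n \<in> S. x n = Pt m} = {}" for m
    using assms(2) by auto
  have Ad_trace: "{n \<in> S. x n \<in> insert (Ad a) (Pt ` a)} = {n \<in> S. x n = Ad a}" for a
    using assms(2) by auto
  show ?thesis
    unfolding conv_on_Phi_Infty_iff[OF ad carrier] no_Pt Ad_trace
    using assms(3) by simp
qed

subsection \<open>Ideals, Fin2(A) and codings into D_I\<close>

lemma ideal_subset: "is_ideal I \<Longrightarrow> A \<in> I \<Longrightarrow> B \<subseteq> A \<Longrightarrow> B \<in> I"
  unfolding is_ideal_def by blast

lemma ideal_Un: "is_ideal I \<Longrightarrow> A \<in> I \<Longrightarrow> B \<in> I \<Longrightarrow> A \<union> B \<in> I"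
  unfolding is_ideal_def by blast

lemma ideal_finite: "is_ideal I \<Longrightarrow> finite F \<Longrightarrow> F \<subseteq> \<Union>I \<Longrightarrow> F \<in> I"
  unfolding is_ideal_def by blast

lemma ideal_UN:
  assumes "is_ideal I" "finite K" "\<And>k. k \<in> K \<Longrightarrow> A k \<in> I"
  shows "(\<Union>k\<in>K. A k) \<in> I"
  using assms(2,3)
proof (induction K rule: finite_induct)
  case empty
  then show ?case using ideal_finite[OF assms(1)] by simp
next
  case (insert k K)
  then show ?case using ideal_Un[OF assms(1)] by simp
qed

lemma notin_ideal_UnD:
  assumes "is_ideal I" "S \<notin> I" "S \<subseteq> A \<union> B"
  shows "A \<notin> I \<or> B \<notin> I"
proof (rule ccontr)
  assume "\<not> (A \<notin> I \<or> B \<notin> I)"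
  then have "A \<union> B \<in> I" using ideal_Un[OF assms(1)] by simp
  then have "S \<in> I" using assms(3) by (rule ideal_subset[OF assms(1)])
  with assms(2) show False by contradiction
qed

lemma notin_ideal_UND:
  assumes "is_ideal I" "finite K" "S \<notin> I" "S \<subseteq> (\<Union>k\<in>K. A k)"
  shows "\<exists>k\<in>K. A k \<notin> I"
proof (rule ccontr)
  assume "\<not> (\<exists>k\<in>K. A k \<notin> I)"
  then have "(\<Union>k\<in>K. A k) \<in> I" using ideal_UN[OF assms(1,2)] by simp
  then have "S \<in> I" using assms(4) by (rule ideal_subset[OF assms(1)])
  with assms(3) show False by contradiction
qed

lemma D_idealD: "f \<in> D_ideal I \<Longrightarrow> {x \<in> \<Union>I. f x = n} \<in> I"
  unfolding D_ideal_def by blast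

lemma finite_preimage_of_finite_fibres:
  assumes "\<And>m. finite {n \<in> S. f n = m}" "finite M"
  shows "finite {n \<in> S. f n \<in> M}"
proof -
  have "{n \<in> S. f n \<in> M} = (\<Union>m\<in>M. {n \<in> S. f n = m})" by blast
  then show ?thesis using assms by simp
qed

lemma countable_code_inverting:
  fixes e :: "nat \<Rightarrow> 'b"
  assumes "inj e" "countable P"
  obtains g :: "'b \<Rightarrow> nat"
  where "\<And>m. g (e m) = m" and "\<And>m. \<exists>q. {p \<in> P. g p = m} \<subseteq> {e m, q}"
proof -
  define g where "g p = (if p \<in> range e then inv e p else to_nat_on P p)" for p
  have g_e: "g (e m) = m" for m
    using assms(1) by (simp add: g_def)
  have "{p \<in> P. g p = m} \<subseteq> {e m, from_nat_into P m}" for m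
  proof
    fix p assume p: "p \<in> {p \<in> P. g p = m}"
    show "p \<in> {e m, from_nat_into P m}"
    proof (cases "p \<in> range e")
      case True
      then obtain k where k: "p = e k" by blast
      with p g_e have "k = m" by simp
      with k show ?thesis by simp
    next
      case False
      with p have "to_nat_on P p = m" by (simp add: g_def)
      moreover have "from_nat_into P (to_nat_on P p) = p"
        using p assms(2) by simp
      ultimately show ?thesis by simp
    qed
  qed
  then have "\<exists>q. {p \<in> P. g p = m} \<subseteq> {e m, q}" for m
    by blast
  with g_e show ?thesis by (rule that)
qed

lemma D_ideal_coding:
  assumes ideal: "is_ideal I" and fib: "\<And>p. {n \<in> \<Union>I. x n = p} \<in> I"
  obtains g :: "phi_pt \<Rightarrow> nat" where "\<And>m. g (Pt m) = m" and "(\<lambda>n. g (x n)) \<in> D_ideal I"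
proof -
  have "inj Pt" by (rule injI) simp
  moreover have "countable (x ` \<Union>I)"
    using ideal unfolding is_ideal_def by simp
  ultimately obtain g :: "phi_pt \<Rightarrow> nat" where g_Pt: "\<And>m. g (Pt m) = m"
    and g_fibres: "\<And>m. \<exists>q. {p \<in> x ` \<Union>I. g p = m} \<subseteq> {Pt m, q}"
    by (rule countable_code_inverting) blast
  have "(\<lambda>n. g (x n)) \<in> D_ideal I"
    unfolding D_ideal_def
  proof (intro CollectI allI)
    fix m
    obtain q where "{p \<in> x ` \<Union>I. g p = m} \<subseteq> {Pt m, q}"
      using g_fibres by blast
    then have "{n \<in> \<Union>I. g (x n) = m} \<subseteq> {n \<in> \<Union>I. x n = Pt m} \<union> {n \<in> \<Union>I. x n = q}"
      by blast
    then show "{n \<in> \<Union>I. g (x n) = m} \<in> I"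
      by (rule ideal_subset[OF ideal ideal_Un[OF ideal fib fib]])
  qed
  with g_Pt show ?thesis
    by (rule that)
qed

lemma Fin2I:
  "F \<subseteq> \<A> \<Longrightarrow> finite F \<Longrightarrow> \<forall>a\<in>\<A>. finite (T \<inter> a) \<Longrightarrow> X \<subseteq> \<Union>F \<union> T \<Longrightarrow> X \<in> Fin2 \<A>"
  unfolding Fin2_def by (intro CollectI exI[of _ F] exI[of _ T] conjI)

lemma Fin2E:
  assumes "X \<in> Fin2 \<A>"
  obtains F T where "F \<subseteq> \<A>" "finite F" "\<forall>a\<in>\<A>. finite (T \<inter> a)" "X \<subseteq> \<Union>F \<union> T"
  using assms unfolding Fin2_def mem_Collect_eq by (elim exE conjE) (rule that)

lemma Fin2_subset:
  assumes "X \<in> Fin2 \<A>" "Y \<subseteq> X"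
  shows "Y \<in> Fin2 \<A>"
proof -
  obtain F T where "F \<subseteq> \<A>" "finite F" "\<forall>a\<in>\<A>. finite (T \<inter> a)" "X \<subseteq> \<Union>F \<union> T"
    using assms(1) by (rule Fin2E)
  moreover have "Y \<subseteq> \<Union>F \<union> T"
    using assms(2) \<open>X \<subseteq> \<Union>F \<union> T\<close> by (rule order_trans)
  ultimately show ?thesis
    by (intro Fin2I[of F _ T])
qed

lemma Fin2_finite_Int: "(\<And>a. a \<in> \<A> \<Longrightarrow> finite (X \<inter> a)) \<Longrightarrow> X \<in> Fin2 \<A>"
  by (rule Fin2I[of "{}" _ X]) auto

lemma FinBW_D:
  assumes "FinBW I T" "\<And>n. n \<in> \<Union>I \<Longrightarrow> x n \<in> topspace T"
  shows "\<exists>S. S \<subseteq> \<Union>I \<and> S \<notin> I \<and> (\<exists>l. conv_on T x S l)"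
proof -
  have "\<forall>n\<in>\<Union>I. x n \<in> topspace T"
    using assms(2) by blast
  with assms(1) show ?thesis
    unfolding FinBW_def by blast
qed

lemma D_ideal_not_conv_on_Phi_Pt:
  assumes ad: "almost_disjoint \<A>" and ideal: "is_ideal I" and f: "f \<in> D_ideal I"
    and S: "S \<subseteq> \<Union>I" "S \<notin> I"
  shows "\<not> conv_on (Phi \<A>) (\<lambda>n. Pt (f n)) S (Pt m)"
proof
  assume "conv_on (Phi \<A>) (\<lambda>n. Pt (f n)) S (Pt m)"
  then have "finite {n \<in> S. f n \<noteq> m}"
    unfolding conv_on_Phi_Pt_iff[OF ad] by simp
  then have "{n \<in> S. f n \<noteq> m} \<in> I"
    using S(1) by (intro ideal_finite[OF ideal]) auto
  moreover have "{n \<in> \<Union>I. f n = m} \<in> I"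
    using f by (rule D_idealD)
  moreover have "S \<subseteq> {n \<in> \<Union>I. f n = m} \<union> {n \<in> S. f n \<noteq> m}"
    using S(1) by blast
  ultimately show False
    using notin_ideal_UnD[OF ideal S(2)] by blast
qed

lemma FinBW_PhiD:
  assumes ad: "almost_disjoint \<A>" and ideal: "is_ideal I"
    and "FinBW I (Phi \<A>)" and f: "f \<in> D_ideal I"
  shows "\<exists>B. B \<subseteq> \<Union>I \<and> B \<notin> I \<and> (\<forall>n. finite {x \<in> B. f x = n}) \<and> f ` B \<in> Fin2 \<A>"
proof -
  let ?x = "\<lambda>n. Pt (f n)"
  have "?x n \<in> topspace (Phi \<A>)" if "n \<in> \<Union>I" for n
    by (simp add: topspace_Phi phi_carrier_def)
  then have "\<exists>S. S \<subseteq> \<Union>I \<and> S \<notin> I \<and> (\<exists>l. conv_on (Phi \<A>) ?x S l)"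
    by (rule FinBW_D[OF assms(3)])
  then obtain S l where S: "S \<subseteq> \<Union>I" "S \<notin> I" and conv: "conv_on (Phi \<A>) ?x S l"
    by blast
  have Pt_mem: "Pt k \<in> Pt ` a \<longleftrightarrow> k \<in> a" for k a
    by auto
  have "l \<in> phi_carrier \<A>"
    using conv unfolding conv_on_def topspace_Phi by blast
  then have "(\<forall>m. finite {n \<in> S. f n = m}) \<and> f ` S \<in> Fin2 \<A>"
  proof (cases rule: phi_carrier_cases)
    case (Pt m)
    with conv D_ideal_not_conv_on_Phi_Pt[OF ad ideal f S] show ?thesis
      by simp
  next
    case (Ad a)
    have fibres: "\<And>m. finite {n \<in> S. f n = m}" and outside: "finite {n \<in> S. f n \<notin> a}"
      using conv unfolding Ad(2) conv_on_Phi_Ad_iff[OF ad Ad(1)] by (simp_all add: Pt_mem)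
    have "f ` S \<subseteq> \<Union>{a} \<union> f ` {n \<in> S. f n \<notin> a}"
      by blast
    then have "f ` S \<in> Fin2 \<A>"
      using Ad(1) outside by (intro Fin2I[of "{a}"]) auto
    with fibres show ?thesis by blast
  next
    case Infty
    have carrier: "?x ` S \<subseteq> phi_carrier \<A>"
      by (auto simp: phi_carrier_def)
    have fibres: "\<And>m. finite {n \<in> S. f n = m}"
      and traces: "\<And>a. a \<in> \<A> \<Longrightarrow> finite {n \<in> S. f n \<in> a}"
      using conv unfolding Infty conv_on_Phi_Infty_iff[OF ad carrier] by (simp_all add: Pt_mem)
    have "f ` S \<in> Fin2 \<A>"
    proof (rule Fin2_finite_Int)
      fix a assume "a \<in> \<A>"
      have "f ` S \<inter> a = f ` {n \<in> S. f n \<in> a}"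
        by blast
      then show "finite (f ` S \<inter> a)"
        using traces[OF \<open>a \<in> \<A>\<close>] by simp
    qed
    with fibres show ?thesis by blast
  qed
  with S show ?thesis
    by (intro exI[of _ S]) blast
qed

lemma conv_on_Phi_of_Pt_valued:
  assumes ad: "almost_disjoint \<A>" and ideal: "is_ideal I" and S: "S \<notin> I"
    and x: "\<And>n. n \<in> S \<Longrightarrow> x n = Pt (f n)"
    and fibres: "\<And>m. finite {n \<in> S. f n = m}" and "f ` S \<in> Fin2 \<A>"
  shows "\<exists>S'\<subseteq>S. S' \<notin> I \<and> (\<exists>l. conv_on (Phi \<A>) x S' l)"
proof -
  obtain F T where F: "F \<subseteq> \<A>" "finite F" and T: "\<forall>a\<in>\<A>. finite (T \<inter> a)"
    and cover: "f ` S \<subseteq> \<Union>F \<union> T"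
    using assms(6) by (rule Fin2E)
  have Pt_fibres: "finite {n \<in> S'. x n = Pt m}" if "S' \<subseteq> S" for S' m
    using fibres[of m] by (rule finite_subset[rotated]) (use that x in auto)
  have "S \<subseteq> (\<Union>a\<in>F. {n \<in> S. f n \<in> a}) \<union> {n \<in> S. f n \<in> T}"
    using cover by blast
  then have "(\<Union>a\<in>F. {n \<in> S. f n \<in> a}) \<notin> I \<or> {n \<in> S. f n \<in> T} \<notin> I"
    by (rule notin_ideal_UnD[OF ideal S])
  moreover have "\<exists>a\<in>F. {n \<in> S. f n \<in> a} \<notin> I" if "(\<Union>a\<in>F. {n \<in> S. f n \<in> a}) \<notin> I"
    using notin_ideal_UND[OF ideal F(2) that order_refl] .
  ultimately consider a where "a \<in> F" "{n \<in> S. f n \<in> a} \<notin> I" | "{n \<in> S. f n \<in> T} \<notin> I"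
    by blast
  then show ?thesis
  proof cases
    case (1 a)
    have outside: "{n \<in> {n \<in> S. f n \<in> a}. x n \<notin> insert (Ad a) (Pt ` a)} = {}"
      using x by auto
    have "conv_on (Phi \<A>) x {n \<in> S. f n \<in> a} (Ad a)"
      unfolding conv_on_Phi_Ad_iff[OF ad subsetD[OF F(1) 1(1)]] outside
    proof (intro conjI allI)
      show "finite {n \<in> {n \<in> S. f n \<in> a}. x n = Pt m}" for m
        by (rule Pt_fibres) blast
    qed simp
    then show ?thesis
      using 1(2) by (intro exI[of _ "{n \<in> S. f n \<in> a}"]) auto
  next
    case 2
    let ?S = "{n \<in> S. f n \<in> T}"
    have carrier: "x ` ?S \<subseteq> phi_carrier \<A>"
      using x by (auto simp: phi_carrier_def)
    have "finite {n \<in> ?S. x n \<in> insert (Ad a) (Pt ` a)}" if "a \<in> \<A>" for a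
    proof -
      have "finite {n \<in> S. f n \<in> T \<inter> a}"
        using fibres T that by (intro finite_preimage_of_finite_fibres) auto
      then show ?thesis by (rule finite_subset[rotated]) (use x in auto)
    qed
    moreover have "finite {n \<in> ?S. x n = Pt m}" for m
      by (rule Pt_fibres) blast
    ultimately have "conv_on (Phi \<A>) x ?S Infty"
      unfolding conv_on_Phi_Infty_iff[OF ad carrier] by simp
    then show ?thesis
      using 2 by (intro exI[of _ ?S]) auto
  qed
qed

lemma notin_ideal_isolated_or_Ad_part:
  assumes ideal: "is_ideal I" and "B \<notin> I" and x: "x ` B \<subseteq> phi_carrier \<A>"
    and "{n \<in> B. x n = Infty} \<in> I"
  shows "{n \<in> B. x n \<in> range Pt} \<notin> I \<or> {n \<in> B. x n \<in> Ad ` \<A>} \<notin> I"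
proof -
  have "B \<subseteq> ({n \<in> B. x n \<in> range Pt} \<union> {n \<in> B. x n \<in> Ad ` \<A>}) \<union> {n \<in> B. x n = Infty}"
  proof
    fix n assume "n \<in> B"
    with x have "x n \<in> phi_carrier \<A>"
      by blast
    then show "n \<in> ({n \<in> B. x n \<in> range Pt} \<union> {n \<in> B. x n \<in> Ad ` \<A>}) \<union> {n \<in> B. x n = Infty}"
      using \<open>n \<in> B\<close> by (cases rule: phi_carrier_cases) auto
  qed
  with assms(4) have "{n \<in> B. x n \<in> range Pt} \<union> {n \<in> B. x n \<in> Ad ` \<A>} \<notin> I"
    using notin_ideal_UnD[OF ideal assms(2)] by blast
  then show ?thesis
    by (rule notin_ideal_UnD[OF ideal _ order_refl])
qed

lemma conv_on_Phi_positive_subset: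
  assumes ad: "almost_disjoint \<A>" and ideal: "is_ideal I" and B: "B \<notin> I"
    and x: "x ` B \<subseteq> phi_carrier \<A>" and Infty: "{n \<in> B. x n = Infty} \<in> I"
    and g_Pt: "\<And>m. g (Pt m) = m" and f: "\<And>n. f n = g (x n)"
    and fibres: "\<And>m. finite {n \<in> B. f n = m}" and img: "f ` B \<in> Fin2 \<A>"
  shows "\<exists>S\<subseteq>B. S \<notin> I \<and> (\<exists>l. conv_on (Phi \<A>) x S l)"
proof -
  define C where "C = {n \<in> B. x n \<in> range Pt}"
  define D where "D = {n \<in> B. x n \<in> Ad ` \<A>}"
  have "C \<notin> I \<or> D \<notin> I"
    unfolding C_def D_def using ideal B x Infty by (rule notin_ideal_isolated_or_Ad_part)
  then show ?thesis
  proof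
    assume "C \<notin> I"
    have "\<exists>S\<subseteq>C. S \<notin> I \<and> (\<exists>l. conv_on (Phi \<A>) x S l)"
    proof (rule conv_on_Phi_of_Pt_valued[OF ad ideal \<open>C \<notin> I\<close>])
      show "x n = Pt (f n)" if "n \<in> C" for n
        using that g_Pt f unfolding C_def by auto
      show "finite {n \<in> C. f n = m}" for m
        using fibres[of m] by (rule finite_subset[rotated]) (auto simp: C_def)
      show "f ` C \<in> Fin2 \<A>"
        using img by (rule Fin2_subset) (auto simp: C_def)
    qed
    then obtain S l where "S \<subseteq> C" "S \<notin> I" "conv_on (Phi \<A>) x S l"
      by blast
    then show ?thesis
      unfolding C_def by (intro exI[of _ S] conjI exI[of _ l]) auto
  next
    assume "D \<notin> I"
    have "conv_on (Phi \<A>) x D Infty"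
    proof (rule conv_on_Phi_Infty_of_Ad_valued[OF ad])
      show "x ` D \<subseteq> Ad ` \<A>"
        unfolding D_def by blast
      show "finite {n \<in> D. x n = p}" for p
        using fibres[of "g p"] by (rule finite_subset[rotated]) (auto simp: D_def f)
    qed
    moreover have "D \<subseteq> B"
      unfolding D_def by blast
    ultimately show ?thesis
      using \<open>D \<notin> I\<close> by (intro exI[of _ D] conjI exI[of _ Infty]) auto
  qed
qed

lemma FinBW_Phi_of_small_fibres:
  assumes ad: "almost_disjoint \<A>" and ideal: "is_ideal I"
    and H: "\<forall>f\<in>D_ideal I. \<exists>B. B \<subseteq> \<Union>I \<and> B \<notin> I \<and> (\<forall>n. finite {x \<in> B. f x = n}) \<and> f ` B \<in> Fin2 \<A>"
    and x: "x ` \<Union>I \<subseteq> phi_carrier \<A>" and fib: "\<And>p. {n \<in> \<Union>I. x n = p} \<in> I"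
  shows "\<exists>S. S \<subseteq> \<Union>I \<and> S \<notin> I \<and> (\<exists>l. conv_on (Phi \<A>) x S l)"
proof -
  obtain g :: "phi_pt \<Rightarrow> nat" where g_Pt: "\<And>m. g (Pt m) = m"
    and g_x: "(\<lambda>n. g (x n)) \<in> D_ideal I"
    by (rule D_ideal_coding[OF ideal fib]) blast
  \<comment> \<open>Reading \<open>Pt m\<close> as \<open>m\<close> keeps \<open>x = Pt \<circ> f\<close> on the isolated part, where (b) controls convergence.\<close>
  define f where "f n = g (x n)" for n
  have "f \<in> D_ideal I"
    using g_x unfolding f_def[abs_def] .
  with H have "\<exists>B. B \<subseteq> \<Union>I \<and> B \<notin> I \<and> (\<forall>m. finite {n \<in> B. f n = m}) \<and> f ` B \<in> Fin2 \<A>"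
    by (rule bspec)
  then obtain B where B: "B \<subseteq> \<Union>I" "B \<notin> I" and fibres: "\<And>m. finite {n \<in> B. f n = m}"
    and img: "f ` B \<in> Fin2 \<A>"
    by blast
  have "\<exists>S\<subseteq>B. S \<notin> I \<and> (\<exists>l. conv_on (Phi \<A>) x S l)"
  proof (rule conv_on_Phi_positive_subset[OF ad ideal B(2) _ _ g_Pt f_def fibres img])
    show "x ` B \<subseteq> phi_carrier \<A>"
      by (rule order_trans[OF image_mono[OF B(1)] x])
    show "{n \<in> B. x n = Infty} \<in> I"
      using B(1) by (intro ideal_subset[OF ideal fib[of Infty]]) auto
  qed
  then obtain S l where "S \<subseteq> B" "S \<notin> I" "conv_on (Phi \<A>) x S l"
    by blast
  with B(1) show ?thesis
    by (intro exI[of _ S] conjI exI[of _ l]) auto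
qed

lemma FinBW_PhiI:
  assumes ad: "almost_disjoint \<A>" and ideal: "is_ideal I"
    and H: "\<forall>f\<in>D_ideal I. \<exists>B. B \<subseteq> \<Union>I \<and> B \<notin> I \<and> (\<forall>n. finite {x \<in> B. f x = n}) \<and> f ` B \<in> Fin2 \<A>"
  shows "FinBW I (Phi \<A>)"
  unfolding FinBW_def
proof (intro conjI allI impI)
  show "Hausdorff_space (Phi \<A>)"
    using ad by (rule Hausdorff_Phi)
  fix x :: "'a \<Rightarrow> phi_pt"
  assume "\<forall>n\<in>\<Union>I. x n \<in> topspace (Phi \<A>)"
  then have x: "x ` \<Union>I \<subseteq> phi_carrier \<A>"
    unfolding topspace_Phi by blast
  show "\<exists>S. S \<subseteq> \<Union>I \<and> S \<notin> I \<and> (\<exists>l. conv_on (Phi \<A>) x S l)"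
  proof (cases "\<exists>p. {n \<in> \<Union>I. x n = p} \<notin> I")
    case True
    then obtain p where p: "{n \<in> \<Union>I. x n = p} \<notin> I"
      by blast
    moreover have "{} \<in> I"
      using ideal_finite[OF ideal] by simp
    ultimately have "{n \<in> \<Union>I. x n = p} \<noteq> {}"
      by metis
    then obtain n where "n \<in> \<Union>I" "x n = p"
      by blast
    then have "p \<in> topspace (Phi \<A>)"
      using x unfolding topspace_Phi by blast
    then have "conv_on (Phi \<A>) x {n \<in> \<Union>I. x n = p} p"
      by (rule conv_on_const) simp
    with p show ?thesis
      by (intro exI[of _ "{n \<in> \<Union>I. x n = p}"] conjI exI[of _ p]) auto
  next
    case False
    then show ?thesis
      by (intro FinBW_Phi_of_small_fibres[OF ad ideal H x]) blast
  qed
qed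

theorem proposition5p2:
  fixes \<A> :: "nat set set" and I :: "'a set set"
  assumes "almost_disjoint \<A>" and "uncountable \<A>" and "is_ideal I"
  shows "FinBW I (Phi \<A>) \<longleftrightarrow>
    (\<forall>f\<in>D_ideal I. \<exists>B. B \<subseteq> \<Union>I \<and> B \<notin> I \<and>
        (\<forall>n. finite {x \<in> B. f x = n}) \<and> f ` B \<in> Fin2 \<A>)"
proof
  assume "FinBW I (Phi \<A>)"
  then show "\<forall>f\<in>D_ideal I. \<exists>B. B \<subseteq> \<Union>I \<and> B \<notin> I \<and>
      (\<forall>n. finite {x \<in> B. f x = n}) \<and> f ` B \<in> Fin2 \<A>"
    using FinBW_PhiD[OF assms(1,3)] by blast
next
  assume "\<forall>f\<in>D_ideal I. \<exists>B. B \<subseteq> \<Union>I \<and> B \<notin> I \<and>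
      (\<forall>n. finite {x \<in> B. f x = n}) \<and> f ` B \<in> Fin2 \<A>"
  then show "FinBW I (Phi \<A>)"
    by (rule FinBW_PhiI[OF assms(1,3)])
qed

end
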